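(* Let $0<q<1$, $\Re\eta>-1$, $\lambda\ge1$, and let $\phi(z)=1+\sum_{n\ge1}E_nz^n$ be analytic in $\Delta$ with $\Re\phi>0$, $\phi(0)=1$, $E_1>0$. Put $$\Psi=2(\lambda\widetilde{[3]}_q-1)\widetilde{[3]}_qL_3+\lambda(\lambda-1)\widetilde{[2]}_q^{\,4}L_2^2,\qquad \Upsilon=2(\lambda\widetilde{[3]}_q-1)\widetilde{[3]}_qE_1^2L_3+\lambda\big[(\lambda-1)E_1^2+2\lambda(E_1-E_2)\big]\widetilde{[2]}_q^{\,4}L_2^2,$$ assumed nonzero. If $f(z)=z+\sum_{n\ge2}a_nz^n$ belongs to $\widetilde{\mathcal{C}_{\Sigma}}{}^{\eta}_q(\lambda;\phi)$, then $$|a_2|\le\min\left\{\frac{E_1}{\lambda|L_2|\widetilde{[2]}_q^{\,2}},\ \sqrt{\frac{2(|E_2-E_1|+E_1)}{|\Psi|}},\ \frac{E_1\sqrt{2E_1}}{\sqrt{|\Upsilon|}}\right\},\qquad |a_3|\le\frac{E_1}{(\lambda\widetilde{[3]}_q-1)\widetilde{[3]}_q|L_3|}+\min\left\{\frac{E_1^2}{\lambda^2\widetilde{[2]}_q^{\,4}|L_2|^2},\ \frac{2(|E_2-E_1|+E_1)}{|\Psi|}\right\}.$$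
   Context: $\Delta=\{z\in\mathbb{C}:|z|<1\}$. $\Sigma$ denotes the class of analytic $f(z)=z+\sum_{n\ge2}a_nz^n$ on $\Delta$ that are univalent and whose inverse $g=f^{-1}$ extends univalently to $\Delta$. For $0<q<1$, $\chi\in\mathbb C$: $\widetilde{[\chi]}_q=\frac{q^{\chi}-q^{-\chi}}{q-q^{-1}}$. Symmetric $q$-derivative: $\widetilde{\mathcal D}_qF(z)=\frac{F(qz)-F(q^{-1}z)}{(q-q^{-1})z}$ ($z\ne0$), $\widetilde{\mathcal D}_qF(0)=F'(0)$. For $\Re\eta>-1$, $\mathcal J^{\eta}_qf(z)=z+\sum_{n\ge2}L_na_nz^n$ with $L_n=\widetilde{[1+\eta]}_q/\widetilde{[n+\eta]}_q$. Subordination $F\prec G$: $F=G\circ h$, $h$ analytic, $h(0)=0$, $|h|<1$. Principal branches for powers. The class $\widetilde{\mathcal{C}_{\Sigma}}{}^{\eta}_q(\lambda;\phi)$ (the case $\mu=0$ of the general class) consists of $f\in\Sigma$, $g=f^{-1}$, with $F=\mathcal J^\eta_qf$, $G=\mathcal J^\eta_qg$ satisfying $$\frac{2\{\widetilde{\mathcal D}_q[z\widetilde{\mathcal D}_qF(z)]\}^{\lambda}}{\widetilde{\mathcal D}_q[F(z)-F(-z)]}\prec\phi(z),\qquad \frac{2\{\widetilde{\mathcal D}_q[w\widetilde{\mathcal D}_qG(w)]\}^{\lambda}}{\widetilde{\mathcal D}_q[G(w)-G(-w)]}\prec\phi(w)\qquad(z,w\in\Delta).$$ *)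

theory Defs
  imports "HOL-Complex_Analysis.Complex_Analysis"
begin

definition qbr :: "real \<Rightarrow> complex \<Rightarrow> complex" where
  "qbr q chi = (of_real q powr chi - of_real q powr (- chi)) / (of_real q - 1 / of_real q)"

definition qbr_r :: "real \<Rightarrow> real \<Rightarrow> real" where
  "qbr_r q x = (q powr x - q powr (- x)) / (q - 1 / q)"

definition qD :: "real \<Rightarrow> (complex \<Rightarrow> complex) \<Rightarrow> complex \<Rightarrow> complex" where
  "qD q F z = (if z = 0 then deriv F 0
               else (F (of_real q * z) - F (z / of_real q)) / ((of_real q - 1 / of_real q) * z))"

definition tcoeff :: "(complex \<Rightarrow> complex) \<Rightarrow> nat \<Rightarrow> complex" where
  "tcoeff f n = (deriv ^^ n) f 0 / of_nat (fact n)"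

definition Lq :: "real \<Rightarrow> complex \<Rightarrow> nat \<Rightarrow> complex" where
  "Lq q eta n = qbr q (1 + eta) / qbr q (of_nat n + eta)"

text \<open>The operator J^eta_q: J f z = z + sum_{n>=2} L_n a_n z^n, written as a power series
  (note a_0 = 0, a_1 = 1, L_1 = 1 for f in Sigma).\<close>
definition Jq :: "real \<Rightarrow> complex \<Rightarrow> (complex \<Rightarrow> complex) \<Rightarrow> complex \<Rightarrow> complex" where
  "Jq q eta f z = z + (\<Sum>n. (if n \<ge> 2 then Lq q eta n * tcoeff f n * z ^ n else 0))"

definition subord :: "(complex \<Rightarrow> complex) \<Rightarrow> (complex \<Rightarrow> complex) \<Rightarrow> bool" where
  "subord F G \<longleftrightarrow> (\<exists>h. h holomorphic_on ball 0 1 \<and> h 0 = 0 \<and>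
      (\<forall>z\<in>ball 0 1. norm (h z) < 1) \<and> (\<forall>z\<in>ball 0 1. F z = G (h z)))"

text \<open>The class Sigma: normalized univalent f on the disk, with g an inverse of f near 0
  that extends univalently (holomorphic and injective) to the whole disk.\<close>
definition bi_univalent_inv :: "(complex \<Rightarrow> complex) \<Rightarrow> (complex \<Rightarrow> complex) \<Rightarrow> bool" where
  "bi_univalent_inv f g \<longleftrightarrow>
     f holomorphic_on ball 0 1 \<and> f 0 = 0 \<and> deriv f 0 = 1 \<and> inj_on f (ball 0 1) \<and>
     g holomorphic_on ball 0 1 \<and> inj_on g (ball 0 1) \<and>
     (\<exists>e>0. \<forall>z\<in>ball 0 e. g (f z) = z)"

text \<open>The expression 2 {D_q[z D_q F(z)]}^lambda / D_q[F(z) - F(-z)] (principal branch).\<close>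
definition Cexpr :: "real \<Rightarrow> real \<Rightarrow> (complex \<Rightarrow> complex) \<Rightarrow> complex \<Rightarrow> complex" where
  "Cexpr q lam F z = 2 * (qD q (\<lambda>t. t * qD q F t) z) powr (of_real lam)
                       / qD q (\<lambda>t. F t - F (- t)) z"

text \<open>The class C_Sigma^eta_q(lambda; phi) (case mu = 0).\<close>
definition classC :: "real \<Rightarrow> complex \<Rightarrow> real \<Rightarrow> (complex \<Rightarrow> complex) \<Rightarrow> (complex \<Rightarrow> complex) \<Rightarrow> bool" where
  "classC q eta lam phi f \<longleftrightarrow> (\<exists>g. bi_univalent_inv f g \<and>
      subord (Cexpr q lam (Jq q eta f)) phi \<and>
      subord (Cexpr q lam (Jq q eta g)) phi)"

end

theory Submission
  imports Defs
begin

unbundle no vec_syntax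

text \<open>Write \<open>Cexpr q \<lambda> (J f) = \<phi> \<circ> h\<close> with a Schwarz function \<open>h\<close>.  The symmetric
  q-derivative acts diagonally on power series, so comparing the first two Taylor coefficients of
  both sides expresses \<open>L\<^sub>2 a\<^sub>2\<close> and \<open>L\<^sub>3 a\<^sub>3\<close> through \<open>E\<^sub>1, E\<^sub>2\<close> and the coefficients
  \<open>w\<^sub>1, w\<^sub>2\<close> of \<open>h\<close>, which satisfy \<open>|w\<^sub>1| \<le> 1\<close> and \<open>|w\<^sub>2| \<le> 1 - |w\<^sub>1|\<^sup>2\<close> (Schwarz--Pick applied
  to \<open>h(z)/z\<close>).  The same holds for the inverse \<open>g\<close>, whose coefficients are \<open>-a\<^sub>2\<close> and
  \<open>2a\<^sub>2\<^sup>2 - a\<^sub>3\<close>.  Adding the two third-coefficient equations eliminates \<open>a\<^sub>3\<close> and bounds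
  \<open>|a\<^sub>2|\<^sup>2\<close>; subtracting them bounds \<open>|a\<^sub>3 - a\<^sub>2\<^sup>2|\<close>.\<close>

lemma q_lt_inverse:
  fixes q :: real
  assumes "0 < q" "q < 1"
  shows "q < 1 / q"
  using assms by (simp add: field_simps) (metis mult_strict_mono' less_eq_real_def mult_1)

lemma of_real_q_minus_inverse_neq_0:
  "0 < q \<Longrightarrow> q < 1 \<Longrightarrow> complex_of_real q - 1 / complex_of_real q \<noteq> 0"
  using q_lt_inverse[of q]
  by (metis of_real_1 of_real_divide of_real_eq_iff order_less_irrefl right_minus_eq)

lemma norm_of_real_powr: "0 < q \<Longrightarrow> norm (complex_of_real q powr w) = q powr Re w"
  by (subst norm_powr_real_powr) auto

lemma norm_qbr_ge_1:
  assumes q: "0 < q" "q < 1" and w: "Re w \<ge> 1"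
  shows "norm (qbr q w) \<ge> 1"
proof -
  have "q powr Re w \<le> q"
    using q w by (metis powr_mono' powr_one less_eq_real_def)
  moreover have "1 / q \<le> q powr (- Re w)"
  proof -
    have "q powr (- 1) \<le> q powr (- Re w)" using q w by (intro powr_mono') auto
    thus ?thesis using q by (simp add: powr_minus divide_inverse)
  qed
  moreover have "norm (complex_of_real q powr (- w)) - norm (complex_of_real q powr w)
      \<le> norm (complex_of_real q powr w - complex_of_real q powr (- w))"
    by (metis norm_minus_commute norm_triangle_ineq2)
  ultimately have num: "1 / q - q \<le> norm (complex_of_real q powr w - complex_of_real q powr (- w))"
    using q by (simp add: norm_of_real_powr)
  have "complex_of_real q - 1 / complex_of_real q = - complex_of_real (1 / q - q)" by simp
  hence den: "norm (complex_of_real q - 1 / complex_of_real q) = 1 / q - q"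
    using q_lt_inverse[OF q] by (simp only: norm_minus_cancel norm_of_real)
  show ?thesis
    unfolding qbr_def norm_divide den using num q_lt_inverse[OF q] by simp
qed

lemma qbr_neq_0:
  assumes q: "0 < q" "q < 1" and w: "Re w > 0"
  shows "qbr q w \<noteq> 0"
proof -
  have "q powr Re w < 1" using q w powr_less_mono2[of "Re w" q 1] by simp
  moreover have "q powr (- Re w) > 1"
    using calculation q powr_gt_zero[of q "Re w"] by (simp add: powr_minus one_less_inverse)
  ultimately have "complex_of_real q powr w \<noteq> complex_of_real q powr (- w)"
    using norm_of_real_powr[OF q(1), of w] norm_of_real_powr[OF q(1), of "- w"] by auto
  thus ?thesis
    unfolding qbr_def using of_real_q_minus_inverse_neq_0[OF q] by simp
qed

lemma norm_Lq_le:
  assumes q: "0 < q" "q < 1" and eta: "Re eta > -1" and n: "2 \<le> n"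
  shows "norm (Lq q eta n) \<le> norm (qbr q (1 + eta))"
proof -
  have "norm (qbr q (of_nat n + eta)) \<ge> 1"
    using n eta by (intro norm_qbr_ge_1[OF q]) auto
  thus ?thesis
    unfolding Lq_def norm_divide by (simp add: divide_le_eq mult_le_cancel_left1 order.trans)
qed

lemma Lq_neq_0:
  assumes q: "0 < q" "q < 1" and eta: "Re eta > -1" and n: "1 \<le> n"
  shows "Lq q eta n \<noteq> 0"
  unfolding Lq_def using qbr_neq_0[OF q, of "1 + eta"] qbr_neq_0[OF q, of "of_nat n + eta"] eta n
  by simp

lemma qbr_r_2_eq:
  assumes "0 < q" "q < 1"
  shows "qbr_r q 2 = q + 1 / q"
proof -
  have "(q + 1 / q) * (q - 1 / q) = q ^ 2 - 1 / q ^ 2"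
    using assms by (simp add: field_simps power2_eq_square)
  thus ?thesis
    using assms q_lt_inverse[OF assms] unfolding qbr_r_def
    by (simp add: powr_minus divide_eq_eq inverse_eq_divide)
qed

lemma qbr_r_3_eq:
  assumes "0 < q" "q < 1"
  shows "qbr_r q 3 = q ^ 2 + 1 + 1 / q ^ 2"
proof -
  have "(q ^ 2 + 1 + 1 / q ^ 2) * (q - 1 / q) = q ^ 3 - 1 / q ^ 3"
    using assms by (simp add: field_simps power2_eq_square power3_eq_cube)
  thus ?thesis
    using assms q_lt_inverse[OF assms] unfolding qbr_r_def
    by (simp add: powr_minus divide_eq_eq inverse_eq_divide)
qed

definition qnum :: "real \<Rightarrow> nat \<Rightarrow> complex" where
  "qnum q n = complex_of_real (qbr_r q (real n))"

lemma qnum_numeral: "qnum q (numeral n) = complex_of_real (qbr_r q (numeral n))"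
  by (simp add: qnum_def)

lemma qnum_eq:
  assumes "0 < q"
  shows "qnum q n = (complex_of_real q ^ n - (1 / complex_of_real q) ^ n)
                      / (complex_of_real q - 1 / complex_of_real q)"
proof -
  have "q powr real n = q ^ n" "q powr (- real n) = (1 / q) ^ n"
    using assms by (simp_all add: powr_minus powr_realpow power_one_over inverse_eq_divide)
  thus ?thesis unfolding qnum_def qbr_r_def by simp
qed

lemma qnum_1: "0 < q \<Longrightarrow> q < 1 \<Longrightarrow> qnum q 1 = 1"
  using of_real_q_minus_inverse_neq_0[of q] by (simp add: qnum_eq)

lemma has_fps_expansion_scale:
  "(\<lambda>z. c * z) has_fps_expansion fps_const (c :: complex) * fps_X"
  using has_fps_expansion_cmult_left[OF has_fps_expansion_fps_X, of c] by simp

lemma has_fps_expansion_divide_X: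
  fixes F :: "complex fps"
  assumes "f has_fps_expansion F" "F $ 0 = 0"
  shows "(\<lambda>z. if z = 0 then F $ 1 else f z / z) has_fps_expansion fps_shift 1 F"
proof (cases "F = 0")
  case True
  then have "eventually (\<lambda>z. f z = 0) (nhds 0)"
    using assms(1) by (simp add: has_fps_expansion_0_iff)
  hence "eventually (\<lambda>z. (if z = 0 then F $ 1 else f z / z) = 0) (nhds 0)"
    by eventually_elim (auto simp: True)
  thus ?thesis using True by (simp add: has_fps_expansion_0_iff)
next
  case False
  hence "1 \<le> subdegree F" using assms(2) by (metis less_one not_le subdegree_eq_0_iff)
  from has_fps_expansion_shift[OF assms(1) this, of "F $ 1"] show ?thesis
    by (simp only: power_one_right)
qed

lemma fps_compose_nth_1_2:
  fixes G H :: "'a :: comm_ring_1 fps"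
  assumes "H $ 0 = 0"
  shows "(G oo H) $ 1 = G $ 1 * H $ 1"
    and "(G oo H) $ 2 = G $ 1 * H $ 2 + G $ 2 * (H $ 1) ^ 2"
proof -
  show "(G oo H) $ 1 = G $ 1 * H $ 1"
    using assms by (simp add: fps_compose_nth)
  have "(H ^ 2) $ 2 = (H $ 1) ^ 2"
    using assms by (simp add: power2_eq_square fps_mult_nth numeral_2_eq_2)
  thus "(G oo H) $ 2 = G $ 1 * H $ 2 + G $ 2 * (H $ 1) ^ 2"
    using assms by (simp add: fps_compose_nth numeral_2_eq_2)
qed

lemma gbinomial_2: "(c :: complex) gchoose 2 = c * (c - 1) / 2"
proof -
  have "of_nat (Suc 1) * (c gchoose Suc 1) = c * (c - 1 gchoose 1)"
    by (rule gbinomial_absorption)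
  thus ?thesis by (simp add: numeral_2_eq_2 field_simps)
qed

lemma has_fps_expansion_powr:
  fixes c :: complex and P :: "complex fps"
  assumes f: "f has_fps_expansion P" and P0: "P $ 0 = 1"
  shows "(\<lambda>z. f z powr c) has_fps_expansion (fps_binomial c oo (P - 1))"
proof -
  have "(\<lambda>z. f z - 1) has_fps_expansion P - 1"
    by (rule has_fps_expansion_diff[OF f has_fps_expansion_1])
  from has_fps_expansion_compose[OF has_fps_expansion_binomial_complex this]
  show ?thesis using P0 by (simp add: o_def)
qed

lemma fps_binomial_compose_nth_1_2:
  fixes c :: complex and P :: "complex fps"
  assumes "P $ 0 = 1"
  shows "(fps_binomial c oo (P - 1)) $ 1 = c * P $ 1"
    and "(fps_binomial c oo (P - 1)) $ 2 = c * P $ 2 + c * (c - 1) / 2 * (P $ 1) ^ 2"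
  using fps_compose_nth_1_2[of "P - 1" "fps_binomial c"] assms
  by (simp_all add: gbinomial_2)

definition fps_qderiv :: "real \<Rightarrow> complex fps \<Rightarrow> complex fps" where
  "fps_qderiv q F = Abs_fps (\<lambda>n. qnum q (Suc n) * F $ Suc n)"

text \<open>No condition on the constant term is needed: \<open>F(qz) - F(z/q)\<close> vanishes at \<open>0\<close> anyway.\<close>
lemma has_fps_expansion_qD:
  fixes F :: "complex \<Rightarrow> complex" and FF :: "complex fps"
  assumes q: "0 < q" "q < 1" and F: "F has_fps_expansion FF"
  shows "qD q F has_fps_expansion fps_qderiv q FF"
proof -
  define Q where "Q = complex_of_real q"
  have dilate: "(\<lambda>z. F (c * z)) has_fps_expansion Abs_fps (\<lambda>n. c ^ n * FF $ n)" for c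
    using has_fps_expansion_compose[OF F has_fps_expansion_scale[of c]]
    by (simp add: fps_compose_linear o_def)
  define DD where "DD = Abs_fps (\<lambda>n. (Q ^ n - (1 / Q) ^ n) * FF $ n)"
  have "(\<lambda>z. F (Q * z) - F (1 / Q * z)) has_fps_expansion
          Abs_fps (\<lambda>n. Q ^ n * FF $ n) - Abs_fps (\<lambda>n. (1 / Q) ^ n * FF $ n)"
    by (rule has_fps_expansion_diff[OF dilate dilate])
  moreover have "Abs_fps (\<lambda>n. Q ^ n * FF $ n) - Abs_fps (\<lambda>n. (1 / Q) ^ n * FF $ n) = DD"
    by (simp add: DD_def fps_eq_iff algebra_simps)
  ultimately have diff: "(\<lambda>z. F (Q * z) - F (z / Q)) has_fps_expansion DD"
    by simp
  define c where "c = 1 / (Q - 1 / Q)"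
  have "(\<lambda>z. c * (if z = 0 then DD $ 1 else (F (Q * z) - F (z / Q)) / z)) has_fps_expansion
           fps_const c * fps_shift 1 DD"
    by (intro has_fps_expansion_cmult_left has_fps_expansion_divide_X[OF diff]) (simp add: DD_def)
  moreover have "(\<lambda>z. c * (if z = 0 then DD $ 1 else (F (Q * z) - F (z / Q)) / z)) = qD q F"
  proof
    fix z
    have Q: "Q - 1 / Q \<noteq> 0" using of_real_q_minus_inverse_neq_0[OF q] by (simp add: Q_def)
    show "c * (if z = 0 then DD $ 1 else (F (Q * z) - F (z / Q)) / z) = qD q F z"
    proof (cases "z = 0")
      case True
      have "FF $ 1 = deriv F 0" using fps_nth_fps_expansion[OF F, of 1] by simp
      thus ?thesis using True Q by (simp add: qD_def c_def DD_def)
    next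
      case False
      thus ?thesis using Q by (simp add: qD_def c_def Q_def field_simps)
    qed
  qed
  moreover have "fps_const c * fps_shift 1 DD = fps_qderiv q FF"
    by (simp add: fps_eq_iff fps_qderiv_def DD_def c_def qnum_eq[OF q(1)] Q_def field_simps)
  ultimately show ?thesis by simp
qed

lemma has_fps_expansion_qD_mult_qD:
  fixes FF :: "complex fps"
  assumes q: "0 < q" "q < 1" and F: "F has_fps_expansion FF"
  shows "qD q (\<lambda>t. t * qD q F t) has_fps_expansion Abs_fps (\<lambda>n. qnum q (Suc n) ^ 2 * FF $ Suc n)"
proof -
  have "(\<lambda>t. t * qD q F t) has_fps_expansion fps_X * fps_qderiv q FF"
    by (rule has_fps_expansion_mult[OF has_fps_expansion_fps_X has_fps_expansion_qD[OF q F]])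
  from has_fps_expansion_qD[OF q this] show ?thesis
    by (simp add: fps_qderiv_def power2_eq_square mult.assoc)
qed

lemma has_fps_expansion_qD_odd_part:
  fixes FF :: "complex fps"
  assumes q: "0 < q" "q < 1" and F: "F has_fps_expansion FF"
  shows "qD q (\<lambda>t. F t - F (- t)) has_fps_expansion
           Abs_fps (\<lambda>n. (1 + (-1) ^ n) * qnum q (Suc n) * FF $ Suc n)"
proof -
  have "(F \<circ> uminus) has_fps_expansion (FF oo - fps_X)"
    by (rule has_fps_expansion_compose[OF F has_fps_expansion_minus[OF has_fps_expansion_fps_X]]) simp
  hence "(\<lambda>t. F (- t)) has_fps_expansion Abs_fps (\<lambda>n. (-1) ^ n * FF $ n)"
    by (simp add: o_def fps_compose_uminus')
  from has_fps_expansion_qD[OF q has_fps_expansion_diff[OF F this]] show ?thesis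
    by (simp add: fps_qderiv_def algebra_simps)
qed

lemma fps_divide_nth_0_1_2:
  fixes N D :: "'a :: field fps"
  assumes D0: "D $ 0 \<noteq> 0"
  shows "(N / D) $ 0 = N $ 0 / D $ 0"
    and "(N / D) $ 1 = (N $ 1 - (N / D) $ 0 * D $ 1) / D $ 0"
    and "(N / D) $ 2 = (N $ 2 - (N / D) $ 0 * D $ 2 - (N / D) $ 1 * D $ 1) / D $ 0"
proof -
  define C where "C = N / D"
  have "C * D = N"
    using D0 by (simp add: C_def fps_divide_unit mult.assoc inverse_mult_eq_1)
  hence "(C * D) $ n = N $ n" for n by simp
  from this[of 0] this[of 1] this[of 2]
  have "C $ 0 * D $ 0 = N $ 0" "C $ 0 * D $ 1 + C $ 1 * D $ 0 = N $ 1"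
    "C $ 0 * D $ 2 + C $ 1 * D $ 1 + C $ 2 * D $ 0 = N $ 2"
    by (simp_all add: fps_mult_nth numeral_2_eq_2)
  thus "(N / D) $ 0 = N $ 0 / D $ 0"
    and "(N / D) $ 1 = (N $ 1 - (N / D) $ 0 * D $ 1) / D $ 0"
    and "(N / D) $ 2 = (N $ 2 - (N / D) $ 0 * D $ 2 - (N / D) $ 1 * D $ 1) / D $ 0"
    unfolding C_def[symmetric] using D0 by (simp_all add: field_simps)
qed

lemma has_fps_expansion_Cexpr:
  fixes F :: "complex \<Rightarrow> complex" and FF :: "complex fps"
  assumes q: "0 < q" "q < 1" and F: "F has_fps_expansion FF" and F1: "FF $ 1 = 1"
  obtains C :: "complex fps" where "Cexpr q lam F has_fps_expansion C"
    and "C $ 1 = of_real lam * qnum q 2 ^ 2 * FF $ 2"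
    and "C $ 2 = (of_real lam * qnum q 3 - 1) * qnum q 3 * FF $ 3
                 + of_real lam * (of_real lam - 1) / 2 * qnum q 2 ^ 4 * (FF $ 2) ^ 2"
proof -
  define P where "P = Abs_fps (\<lambda>n. qnum q (Suc n) ^ 2 * FF $ Suc n)"
  define D where "D = Abs_fps (\<lambda>n. (1 + (-1) ^ n) * qnum q (Suc n) * FF $ Suc n)"
  define R where "R = fps_binomial (of_real lam) oo (P - 1)"
  have "qnum q (Suc 0) = 1" "FF $ Suc 0 = 1" using qnum_1[OF q] F1 by simp_all
  hence P0: "P $ 0 = 1" and D0: "D $ 0 = 2" by (simp_all add: P_def D_def)
  have "(\<lambda>z. 2 * qD q (\<lambda>t. t * qD q F t) z powr of_real lam) has_fps_expansion fps_const 2 * R"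
    unfolding R_def using has_fps_expansion_qD_mult_qD[OF q F, folded P_def]
    by (intro has_fps_expansion_cmult_left has_fps_expansion_powr P0)
  moreover have "qD q (\<lambda>t. F t - F (- t)) has_fps_expansion D"
    unfolding D_def by (rule has_fps_expansion_qD_odd_part[OF q F])
  ultimately have expansion: "Cexpr q lam F has_fps_expansion fps_const 2 * R / D"
    using has_fps_expansion_divide' D0 by (fastforce simp: Cexpr_def[abs_def])
  have D1: "D $ 1 = 0" and D2: "D $ 2 = 2 * qnum q 3 * FF $ 3"
    by (simp_all add: D_def numeral_3_eq_3)
  have R0: "R $ 0 = 1" by (simp add: R_def)
  have R1: "R $ 1 = of_real lam * qnum q 2 ^ 2 * FF $ 2"
    and R2: "R $ 2 = of_real lam * qnum q 3 ^ 2 * FF $ 3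
                 + of_real lam * (of_real lam - 1) / 2 * (qnum q 2 ^ 2 * FF $ 2) ^ 2"
    using fps_binomial_compose_nth_1_2[OF P0, of "of_real lam"]
    by (simp_all add: R_def P_def numeral_2_eq_2 numeral_3_eq_3)
  note C = fps_divide_nth_0_1_2[of D "fps_const 2 * R", unfolded D0 D1 D2]
  have C1: "(fps_const 2 * R / D) $ 1 = R $ 1"
    and C2: "(fps_const 2 * R / D) $ 2 = R $ 2 - qnum q 3 * FF $ 3"
    using C R0 by (simp_all add: diff_divide_distrib)
  show ?thesis
  proof (rule that[OF expansion])
    show "(fps_const 2 * R / D) $ 1 = of_real lam * qnum q 2 ^ 2 * FF $ 2"
      unfolding C1 R1 ..
    show "(fps_const 2 * R / D) $ 2 = (of_real lam * qnum q 3 - 1) * qnum q 3 * FF $ 3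
                 + of_real lam * (of_real lam - 1) / 2 * qnum q 2 ^ 4 * (FF $ 2) ^ 2"
      unfolding C2 R2 by (simp add: field_simps eval_nat_numeral)
  qed
qed

lemma has_fps_expansion_fps_expansion_ball:
  "f holomorphic_on ball 0 r \<Longrightarrow> 0 < r \<Longrightarrow> f has_fps_expansion fps_expansion f 0"
  by (rule has_fps_expansion_fps_expansion[of "ball 0 r"]) auto

lemma fps_expansion_rotation:
  assumes "\<And>z. norm z < 1 \<Longrightarrow> h z = \<alpha> * z"
  shows "fps_expansion h 0 = fps_const \<alpha> * fps_X"
proof -
  have "eventually (\<lambda>z::complex. z \<in> ball 0 1) (nhds 0)"
    by (intro eventually_nhds_in_open) auto
  hence "eventually (\<lambda>z. h z = \<alpha> * z) (nhds 0)"
    by eventually_elim (simp add: assms)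
  hence "h has_fps_expansion fps_const \<alpha> * fps_X"
    using has_fps_expansion_cong has_fps_expansion_scale by blast
  thus ?thesis by (rule fps_expansion_eqI)
qed

lemma norm_one_minus_cnj_mult_self:
  assumes "norm w < 1"
  shows "norm (1 - cnj w * w) = 1 - norm w ^ 2"
proof -
  have "1 - cnj w * w = of_real (1 - norm w ^ 2)"
    using complex_norm_square[of w] by (simp add: mult.commute)
  moreover have "0 \<le> 1 - norm w ^ 2"
    using assms by (simp add: power_le_one)
  ultimately show ?thesis by (metis norm_of_real abs_of_nonneg)
qed

text \<open>The invariant form of the Schwarz lemma at the origin, obtained by composing with the
  disc automorphism that sends \<open>k 0\<close> to \<open>0\<close>.\<close>
lemma Schwarz_Pick_deriv_0:
  assumes holk: "k holomorphic_on ball 0 1" and kb: "\<And>z. norm z < 1 \<Longrightarrow> norm (k z) < 1"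
  shows "norm (deriv k 0) \<le> 1 - norm (k 0) ^ 2"
proof -
  define w where "w = k 0"
  have w: "norm w < 1" using kb[of 0] by (simp add: w_def)
  define m where "m z = (k z - w) / (1 - cnj w * k z)" for z
  have m: "m z = Moebius_function 0 w (k z)" for z
    by (simp add: m_def Moebius_function_simple)
  have den: "1 - cnj w * k z \<noteq> 0" if "norm z < 1" for z
  proof -
    have "norm (cnj w * k z) < 1"
      using kb[OF that] w by (simp add: norm_mult) (metis mult_strict_mono' norm_ge_zero mult_1 le_less)
    thus ?thesis by auto
  qed
  have holm: "m holomorphic_on ball 0 1"
    unfolding m_def using den by (intro holomorphic_intros holk) auto
  have mb: "norm (m z) < 1" if "norm z < 1" for z
    unfolding m using kb[OF that] w by (intro Moebius_function_norm_lt_1)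
  have w2: "norm w ^ 2 < 1"
    using w by (simp add: power_less_one_iff)
  with norm_one_minus_cnj_mult_self[OF w] have den0: "1 - cnj w * w \<noteq> 0"
    by auto
  have dk: "(k has_field_derivative deriv k 0) (at 0)"
    using holk by (intro holomorphic_derivI[of _ "ball 0 1"]) auto
  have "(m has_field_derivative
           ((deriv k 0 - 0) * (1 - cnj w * k 0) - (k 0 - w) * (0 - cnj w * deriv k 0))
             / ((1 - cnj w * k 0) * (1 - cnj w * k 0))) (at 0)"
    unfolding m_def[abs_def] using den[of 0]
    by (intro DERIV_divide DERIV_diff DERIV_cmult DERIV_const dk) auto
  hence "(m has_field_derivative deriv k 0 / (1 - cnj w * w)) (at 0)"
    using den0 by (simp add: w_def)
  hence "deriv m 0 = deriv k 0 / (1 - cnj w * w)"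
    by (rule DERIV_imp_deriv)
  moreover have "m 0 = 0" by (simp add: m_def w_def)
  hence "norm (deriv m 0) \<le> 1"
    using Schwarz_Lemma(2)[OF holm _ mb, of 0] by simp
  ultimately show ?thesis
    unfolding w_def[symmetric] using den0 w2
    by (simp add: norm_divide norm_one_minus_cnj_mult_self[OF w] divide_le_eq)
qed

lemma Schwarz_quotient_maps_disc:
  assumes holh: "h holomorphic_on ball 0 1" and h0: "h 0 = 0"
    and hb: "\<And>z. norm z < 1 \<Longrightarrow> norm (h z) < 1"
    and not_rotation: "\<not> ((\<exists>z. norm z < 1 \<and> z \<noteq> 0 \<and> norm (h z) = norm z) \<or> norm (deriv h 0) = 1)"
    and z: "norm z < 1"
  shows "norm (if z = 0 then deriv h 0 else h z / z) < 1"
proof (cases "z = 0")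
  case True
  thus ?thesis using not_rotation Schwarz_Lemma(2)[OF holh h0 hb, of 0] by simp
next
  case False
  have "norm (h z) \<noteq> norm z" using not_rotation False z by blast
  moreover have "norm (h z) \<le> norm z" using Schwarz_Lemma(1)[OF holh h0 hb, of z] z by simp
  ultimately show ?thesis using False by (simp add: norm_divide)
qed

lemma Schwarz_second_coeff:
  fixes h :: "complex \<Rightarrow> complex"
  assumes holh: "h holomorphic_on ball 0 1" and h0: "h 0 = 0"
    and hb: "\<And>z. norm z < 1 \<Longrightarrow> norm (h z) < 1"
  shows "norm (fps_expansion h 0 $ 1) \<le> 1"
    and "norm (fps_expansion h 0 $ 2) \<le> 1 - norm (fps_expansion h 0 $ 1) ^ 2"
proof -
  define H where "H = fps_expansion h 0"
  have He: "h has_fps_expansion H"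
    unfolding H_def by (rule has_fps_expansion_fps_expansion_ball[OF holh]) simp
  have H1: "H $ 1 = deriv h 0"
    using fps_nth_fps_expansion[OF He, of 1] by simp
  note Schwarz = Schwarz_Lemma[OF holh h0 hb]
  show "norm (fps_expansion h 0 $ 1) \<le> 1"
    using Schwarz(2)[of 0] H1 by (simp flip: H_def)
  have "norm (H $ 2) \<le> 1 - norm (H $ 1) ^ 2"
  proof (cases "(\<exists>z. norm z < 1 \<and> z \<noteq> 0 \<and> norm (h z) = norm z) \<or> norm (deriv h 0) = 1")
    case True
    then obtain \<alpha> where rotation: "\<And>z. norm z < 1 \<Longrightarrow> h z = \<alpha> * z" and "norm \<alpha> = 1"
      using Schwarz(3) by blast
    have "H = fps_const \<alpha> * fps_X"
      unfolding H_def using rotation by (rule fps_expansion_rotation)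
    thus ?thesis using \<open>norm \<alpha> = 1\<close> by (simp add: numeral_2_eq_2)
  next
    case False
    define k where "k z = (if z = 0 then deriv h 0 else h z / z)" for z
    have holk: "k holomorphic_on ball 0 1"
      by (rule pole_theorem_open_0[OF holh, where a = 0]) (auto simp: k_def h0)
    have kb: "norm (k z) < 1" if "norm z < 1" for z
      unfolding k_def using Schwarz_quotient_maps_disc[OF holh h0 hb False that] .
    have H0: "H $ 0 = 0" using fps_nth_fps_expansion[OF He, of 0] h0 by simp
    have "k has_fps_expansion fps_shift 1 H"
      unfolding k_def[abs_def] using has_fps_expansion_divide_X[OF He H0, unfolded H1] .
    hence "deriv k 0 = H $ 2"
      using fps_nth_fps_expansion[of k "fps_shift 1 H" 1] by (simp add: numeral_2_eq_2)
    moreover have "k 0 = H $ 1"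
      using H1 by (simp add: k_def)
    ultimately show ?thesis using Schwarz_Pick_deriv_0[OF holk kb] by simp
  qed
  thus "norm (fps_expansion h 0 $ 2) \<le> 1 - norm (fps_expansion h 0 $ 1) ^ 2"
    by (simp add: H_def)
qed

text \<open>\<open>w\<^sub>1, w\<^sub>2\<close> are the first Taylor coefficients of the Schwarz function \<open>h\<close> with \<open>F = \<phi> \<circ> h\<close>.\<close>
lemma subord_fps_coeffs:
  fixes F phi :: "complex \<Rightarrow> complex" and C :: "complex fps"
  assumes sub: "subord F phi" and phi_hol: "phi holomorphic_on ball 0 1"
    and F: "F has_fps_expansion C"
  obtains w1 w2 where "norm w1 \<le> 1" "norm w2 \<le> 1 - norm w1 ^ 2"
    and "C $ 1 = deriv phi 0 * w1"
    and "C $ 2 = deriv phi 0 * w2 + (deriv ^^ 2) phi 0 / 2 * w1 ^ 2"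
proof -
  obtain h where holh: "h holomorphic_on ball 0 1" and h0: "h 0 = 0"
    and hb: "\<forall>z\<in>ball 0 1. norm (h z) < 1" and Fh: "\<forall>z\<in>ball 0 1. F z = phi (h z)"
    using sub unfolding subord_def by blast
  define H where "H = fps_expansion h 0"
  define Phi where "Phi = fps_expansion phi 0"
  have He: "h has_fps_expansion H"
    unfolding H_def by (rule has_fps_expansion_fps_expansion_ball[OF holh]) simp
  have Pe: "phi has_fps_expansion Phi"
    unfolding Phi_def by (rule has_fps_expansion_fps_expansion_ball[OF phi_hol]) simp
  have H0: "H $ 0 = 0" using fps_nth_fps_expansion[OF He, of 0] h0 by simp
  have "eventually (\<lambda>z::complex. z \<in> ball 0 1) (nhds 0)"
    by (intro eventually_nhds_in_open) auto
  hence "eventually (\<lambda>z. F z = (phi \<circ> h) z) (nhds 0)"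
    by eventually_elim (simp add: Fh)
  hence "F has_fps_expansion (Phi oo H)"
    using has_fps_expansion_compose[OF Pe He H0] has_fps_expansion_cong by blast
  hence C: "C = Phi oo H" using F fps_expansion_unique_complex by blast
  have "Phi $ 1 = deriv phi 0" "Phi $ 2 = (deriv ^^ 2) phi 0 / 2"
    using fps_nth_fps_expansion[OF Pe, of 1] fps_nth_fps_expansion[OF Pe, of 2] by simp_all
  hence "C $ 1 = deriv phi 0 * H $ 1"
    and "C $ 2 = deriv phi 0 * H $ 2 + (deriv ^^ 2) phi 0 / 2 * (H $ 1) ^ 2"
    unfolding C by (simp_all only: fps_compose_nth_1_2[OF H0])
  moreover have "norm (H $ 1) \<le> 1" "norm (H $ 2) \<le> 1 - norm (H $ 1) ^ 2"
    unfolding H_def using hb by (intro Schwarz_second_coeff[OF holh h0]; simp)+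
  ultimately show ?thesis
    using that by blast
qed

lemma tcoeff_eq_fps_expansion: "tcoeff f n = fps_expansion f 0 $ n"
  by (simp add: tcoeff_def fps_expansion_def)

lemma has_fps_expansion_Jq:
  assumes q: "0 < q" "q < 1" and eta: "Re eta > -1" and holf: "f holomorphic_on ball 0 1"
  shows "Jq q eta f has_fps_expansion
           Abs_fps (\<lambda>n. if n = 1 then 1 else if 2 \<le> n then Lq q eta n * tcoeff f n else 0)"
    (is "_ has_fps_expansion ?JF")
proof (rule has_fps_expansionI)
  define Ff where "Ff = fps_expansion f 0"
  define M where "M = norm (qbr q (1 + eta))"
  have rad: "fps_conv_radius Ff \<ge> 1"
    unfolding Ff_def using holf by (intro conv_radius_fps_expansion) (simp add: one_ereal_def)
  have "eventually (\<lambda>u::complex. u \<in> ball 0 1) (nhds 0)"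
    by (intro eventually_nhds_in_open) auto
  thus "eventually (\<lambda>u. (\<lambda>n. ?JF $ n * u ^ n) sums Jq q eta f u) (nhds 0)"
  proof eventually_elim
    case (elim u)
    define T where "T n = (if 2 \<le> n then Lq q eta n * tcoeff f n * u ^ n else 0)" for n
    have "ereal (norm u) < 1" using elim by simp
    hence "ereal (norm u) < fps_conv_radius Ff"
      using rad by (rule less_le_trans)
    hence summable_Ff: "summable (\<lambda>n. norm (Ff $ n * u ^ n))"
      by (rule norm_summable_fps)
    have "norm (T n) \<le> M * norm (Ff $ n * u ^ n)" for n
      using norm_Lq_le[OF q eta, of n] mult_right_mono[of "norm (Lq q eta n)" M "norm (Ff $ n * u ^ n)"]
      by (simp add: T_def tcoeff_eq_fps_expansion Ff_def M_def norm_mult mult.assoc)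
    hence "summable T"
      by (intro summable_comparison_test'[OF summable_mult[OF summable_Ff, of M]])
    hence "(\<lambda>n. (if n = 1 then u else 0) + T n) sums (u + suminf T)"
      by (intro sums_add summable_sums) (use sums_single[of 1 "\<lambda>_. u"] in simp)
    moreover have "(\<lambda>n. (if n = 1 then u else 0) + T n) = (\<lambda>n. ?JF $ n * u ^ n)"
      by (rule ext) (simp add: T_def)
    ultimately show ?case by (simp add: Jq_def T_def[abs_def])
  qed
qed

lemma inverse_taylor_coeffs:
  assumes holf: "f holomorphic_on ball 0 1" and holg: "g holomorphic_on ball 0 1"
    and f0: "f 0 = 0" and df: "deriv f 0 = 1"
    and e: "e > 0" "\<forall>z\<in>ball 0 e. g (f z) = z"
  shows "tcoeff g 2 = - tcoeff f 2" and "tcoeff g 3 = 2 * tcoeff f 2 ^ 2 - tcoeff f 3"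
proof -
  define Ff where "Ff = fps_expansion f 0"
  define Gg where "Gg = fps_expansion g 0"
  have Fe: "f has_fps_expansion Ff"
    unfolding Ff_def by (rule has_fps_expansion_fps_expansion_ball[OF holf]) simp
  have Ge: "g has_fps_expansion Gg"
    unfolding Gg_def by (rule has_fps_expansion_fps_expansion_ball[OF holg]) simp
  have F0: "Ff $ 0 = 0" and F1: "Ff $ Suc 0 = 1"
    using fps_nth_fps_expansion[OF Fe, of 0] fps_nth_fps_expansion[OF Fe, of 1] f0 df by simp_all
  have "eventually (\<lambda>u. u \<in> ball 0 e) (nhds 0)"
    using e by (intro eventually_nhds_in_open) auto
  hence "eventually (\<lambda>u. (g \<circ> f) u = u) (nhds 0)"
    by eventually_elim (use e in simp)
  hence "(g \<circ> f) has_fps_expansion fps_X"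
    using has_fps_expansion_cong[of "g \<circ> f" "\<lambda>x. x" fps_X fps_X] has_fps_expansion_fps_X by simp
  hence GF: "Gg oo Ff = fps_X"
    using has_fps_expansion_compose[OF Ge Fe F0] fps_expansion_unique_complex by blast
  have "(Gg oo Ff) $ n = fps_X $ n" for n by (simp only: GF)
  note coeff = this[of 0] this[of 1] this[of 2] this[of 3]
  have G0: "Gg $ 0 = 0" using coeff(1) by simp
  have G1: "Gg $ 1 = 1" using coeff(2) F0 F1 G0 by (simp add: fps_compose_nth)
  have G2: "Gg $ 2 = - Ff $ 2"
    using coeff(3) F0 F1 G0 G1
    by (simp add: fps_compose_nth fps_mult_nth numeral_2_eq_2 power2_eq_square
        sum.atLeast0_atMost_Suc eq_neg_iff_add_eq_0 add.commute)
  have G3: "Gg $ 3 = 2 * (Ff $ 2) ^ 2 - Ff $ 3"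
    using coeff(4) F0 F1 G0 G1 G2
    by (simp add: fps_compose_nth fps_mult_nth numeral_2_eq_2 numeral_3_eq_3 power2_eq_square
        power3_eq_cube sum.atLeast0_atMost_Suc algebra_simps)
  show "tcoeff g 2 = - tcoeff f 2" and "tcoeff g 3 = 2 * tcoeff f 2 ^ 2 - tcoeff f 3"
    using G2 G3 by (simp_all add: tcoeff_eq_fps_expansion Ff_def Gg_def)
qed

lemma norm_subord_coeff2_le:
  fixes w1 w2 E2 :: complex and E1 :: real
  assumes E1: "E1 > 0" and w: "norm w1 \<le> 1" "norm w2 \<le> 1 - norm w1 ^ 2"
  shows "norm (of_real E1 * w2 + E2 * w1 ^ 2) \<le> norm (E2 - of_real E1) + E1"
proof -
  have "norm (of_real E1 * (w2 + w1 ^ 2)) \<le> E1 * (norm w2 + norm w1 ^ 2)"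
    using E1 norm_triangle_ineq[of w2 "w1 ^ 2"] by (simp add: norm_mult norm_power mult_left_mono)
  also have "\<dots> \<le> E1" using E1 w by (simp add: mult_left_le)
  finally have "norm (of_real E1 * (w2 + w1 ^ 2)) \<le> E1" .
  moreover have "norm ((E2 - of_real E1) * w1 ^ 2) \<le> norm (E2 - of_real E1)"
    using w by (simp add: norm_mult norm_power mult_left_le power_le_one)
  moreover have "of_real E1 * w2 + E2 * w1 ^ 2 = of_real E1 * (w2 + w1 ^ 2) + (E2 - of_real E1) * w1 ^ 2"
    by (simp add: algebra_simps)
  ultimately show ?thesis
    using norm_triangle_ineq[of "of_real E1 * (w2 + w1 ^ 2)" "(E2 - of_real E1) * w1 ^ 2"] by simp
qed

text \<open>The coefficient equations of the two subordinations: \<open>a, b\<close> stand for \<open>a\<^sub>2, a\<^sub>3\<close>, \<open>s\<^sub>n\<close> for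
  \<open>[n]\<^sub>q\<close>, and \<open>u\<^sub>i\<close>, \<open>v\<^sub>i\<close> are the Schwarz coefficients for \<open>f\<close> and for \<open>g = f\<^sup>-\<^sup>1\<close>.
  \<open>Psi\<close> and \<open>Ups\<close> below are the paper's \<open>\<Psi>\<close> and \<open>\<Upsilon>\<close>.\<close>
locale bi_subordination_coeffs =
  fixes lam s2 s3 E1 :: real and E2 a b L2 L3 u1 u2 v1 v2 :: complex
  assumes s2_pos: "s2 > 0" and s3_gt_1: "s3 > 1" and lam_ge_1: "lam \<ge> 1" and E1_pos: "E1 > 0"
    and L2_nz: "L2 \<noteq> 0" and L3_nz: "L3 \<noteq> 0"
    and u1_le: "norm u1 \<le> 1" and u2_le: "norm u2 \<le> 1 - norm u1 ^ 2"
    and v2_le: "norm v2 \<le> 1 - norm v1 ^ 2"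
    and coeff2_f: "of_real lam * of_real s2 ^ 2 * (L2 * a) = of_real E1 * u1"
    and coeff3_f: "(of_real lam * of_real s3 - 1) * of_real s3 * (L3 * b)
             + of_real lam * (of_real lam - 1) / 2 * of_real s2 ^ 4 * (L2 * a) ^ 2
           = of_real E1 * u2 + E2 * u1 ^ 2"
    and coeff2_g: "of_real lam * of_real s2 ^ 2 * (L2 * - a) = of_real E1 * v1"
    and coeff3_g: "(of_real lam * of_real s3 - 1) * of_real s3 * (L3 * (2 * a ^ 2 - b))
             + of_real lam * (of_real lam - 1) / 2 * of_real s2 ^ 4 * (L2 * - a) ^ 2
           = of_real E1 * v2 + E2 * v1 ^ 2"
begin

definition Psi :: complex where
  "Psi = of_real (2 * (lam * s3 - 1) * s3) * L3 + of_real (lam * (lam - 1) * s2 ^ 4) * L2\<^sup>2"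

definition Ups :: complex where
  "Ups = of_real (2 * (lam * s3 - 1) * s3 * E1\<^sup>2) * L3
         + of_real lam * (of_real ((lam - 1) * E1\<^sup>2) + of_real (2 * lam) * (of_real E1 - E2))
           * of_real (s2 ^ 4) * L2\<^sup>2"

lemma third_coeff_factor_pos: "(lam * s3 - 1) * s3 > 0"
proof -
  have "1 * s3 \<le> lam * s3" using lam_ge_1 s3_gt_1 by (intro mult_right_mono) auto
  hence "lam * s3 - 1 > 0" using s3_gt_1 by linarith
  thus ?thesis using s3_gt_1 by simp
qed

lemma v1_eq: "v1 = - u1"
proof -
  have "of_real E1 * v1 = of_real E1 * (- u1)"
    using coeff2_f coeff2_g by (simp add: algebra_simps)
  thus ?thesis using E1_pos by (simp only: mult_cancel_left) simp
qed

lemma norm_a_le: "norm a \<le> E1 / (lam * norm L2 * s2 ^ 2)"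
proof -
  have "lam * s2 ^ 2 * norm L2 * norm a = norm (of_real E1 * u1)"
    using arg_cong[OF coeff2_f, of norm] lam_ge_1 s2_pos by (simp add: norm_mult norm_power)
  also have "\<dots> \<le> E1" using u1_le E1_pos by (simp add: norm_mult mult_left_le)
  finally show ?thesis
    using lam_ge_1 s2_pos L2_nz by (simp add: pos_le_divide_eq mult_ac)
qed

text \<open>Adding the two third-coefficient equations eliminates \<open>b\<close>.\<close>
lemma Psi_mult_a2: "Psi * a ^ 2 = (of_real E1 * u2 + E2 * u1 ^ 2) + (of_real E1 * v2 + E2 * v1 ^ 2)"
proof -
  have "Psi * a ^ 2 = ((of_real lam * of_real s3 - 1) * of_real s3 * (L3 * b)
             + of_real lam * (of_real lam - 1) / 2 * of_real s2 ^ 4 * (L2 * a) ^ 2)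
           + ((of_real lam * of_real s3 - 1) * of_real s3 * (L3 * (2 * a ^ 2 - b))
             + of_real lam * (of_real lam - 1) / 2 * of_real s2 ^ 4 * (L2 * - a) ^ 2)"
    by (simp add: Psi_def field_simps power2_eq_square)
  thus ?thesis unfolding coeff3_f coeff3_g .
qed

lemma norm_a_sq_le_Psi:
  assumes "Psi \<noteq> 0"
  shows "norm a ^ 2 \<le> 2 * (norm (E2 - E1) + E1) / norm Psi"
proof -
  have "norm Psi * norm a ^ 2
      \<le> norm (of_real E1 * u2 + E2 * u1 ^ 2) + norm (of_real E1 * v2 + E2 * v1 ^ 2)"
    using arg_cong[OF Psi_mult_a2, of norm] norm_triangle_ineq by (simp add: norm_mult norm_power)
  also have "\<dots> \<le> 2 * (norm (E2 - E1) + E1)"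
    using norm_subord_coeff2_le[OF E1_pos u1_le u2_le, of E2]
      norm_subord_coeff2_le[OF E1_pos _ v2_le, of E2] u1_le by (simp add: v1_eq)
  finally show ?thesis
    using assms by (simp add: field_simps mult.commute)
qed

text \<open>Eliminating \<open>E\<^sub>2 u\<^sub>1\<^sup>2\<close> from \<open>Psi a\<^sup>2\<close> with the help of the second-coefficient equation.\<close>
lemma Ups_mult_a2: "Ups * a ^ 2 = of_real (E1 ^ 3) * (u2 + v2 + 2 * u1 ^ 2)"
proof -
  have "Ups * a ^ 2 = of_real (E1 ^ 2) * (Psi * a ^ 2)
          + 2 * (of_real E1 - E2) * (of_real lam * of_real s2 ^ 2 * (L2 * a)) ^ 2"
    by (simp add: Ups_def Psi_def field_simps power2_eq_square eval_nat_numeral)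
  thus ?thesis
    unfolding Psi_mult_a2 coeff2_f v1_eq by (simp add: field_simps power2_eq_square power3_eq_cube)
qed

lemma norm_a_le_Ups:
  assumes "Ups \<noteq> 0"
  shows "norm a \<le> E1 * sqrt (2 * E1) / sqrt (norm Ups)"
proof -
  have "norm (u2 + v2 + 2 * u1 ^ 2) \<le> norm u2 + norm v2 + 2 * norm u1 ^ 2"
    using norm_triangle_ineq[of "u2 + v2" "2 * u1 ^ 2"] norm_triangle_ineq[of u2 v2]
    by (simp add: norm_mult norm_power)
  also have "\<dots> \<le> 2" using u2_le v2_le by (simp add: v1_eq)
  finally have "norm Ups * norm a ^ 2 \<le> E1 ^ 3 * 2"
    using arg_cong[OF Ups_mult_a2, of norm] E1_pos by (simp add: norm_mult norm_power)
  hence "norm a ^ 2 \<le> 2 * E1 ^ 3 / norm Ups"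
    using assms by (simp add: field_simps mult.commute)
  hence "norm a \<le> sqrt (2 * E1 ^ 3 / norm Ups)"
    by (simp add: real_le_rsqrt)
  also have "\<dots> = E1 * sqrt (2 * E1) / sqrt (norm Ups)"
    using E1_pos by (simp add: real_sqrt_divide real_sqrt_mult power3_eq_cube)
  finally show ?thesis .
qed

text \<open>Subtracting the two third-coefficient equations eliminates the \<open>L\<^sub>2\<close>-terms.\<close>
lemma b_minus_a2_eq: "of_real (2 * (lam * s3 - 1) * s3) * L3 * (b - a ^ 2) = of_real E1 * (u2 - v2)"
proof -
  have "of_real (2 * (lam * s3 - 1) * s3) * L3 * (b - a ^ 2)
      = ((of_real lam * of_real s3 - 1) * of_real s3 * (L3 * b)
          + of_real lam * (of_real lam - 1) / 2 * of_real s2 ^ 4 * (L2 * a) ^ 2)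
        - ((of_real lam * of_real s3 - 1) * of_real s3 * (L3 * (2 * a ^ 2 - b))
          + of_real lam * (of_real lam - 1) / 2 * of_real s2 ^ 4 * (L2 * - a) ^ 2)"
    by (simp add: field_simps power2_eq_square)
  thus ?thesis unfolding coeff3_f coeff3_g v1_eq by (simp add: algebra_simps)
qed

lemma norm_b_minus_a2_le: "norm (b - a ^ 2) \<le> E1 / ((lam * s3 - 1) * s3 * norm L3)"
proof -
  define K where "K = (lam * s3 - 1) * s3 * norm L3"
  have K: "K > 0" using third_coeff_factor_pos L3_nz by (simp add: K_def)
  have "norm (complex_of_real (2 * (lam * s3 - 1) * s3)) * norm L3 = 2 * K"
    using third_coeff_factor_pos by (simp only: norm_of_real K_def)
  hence "2 * K * norm (b - a ^ 2) = E1 * norm (u2 - v2)"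
    using arg_cong[OF b_minus_a2_eq, of norm] E1_pos by (simp add: norm_mult)
  also have "\<dots> \<le> E1 * 2"
    using u2_le v2_le norm_triangle_ineq4[of u2 v2] E1_pos
    by (intro mult_left_mono) (smt (verit) zero_le_power2, simp)
  finally have "norm (b - a ^ 2) \<le> E1 / K"
    using K by (simp add: pos_le_divide_eq mult.commute)
  thus ?thesis by (simp add: K_def)
qed

lemma norm_b_le:
  assumes "Psi \<noteq> 0"
  shows "norm b \<le> E1 / ((lam * s3 - 1) * s3 * norm L3)
           + min (E1\<^sup>2 / (lam\<^sup>2 * s2 ^ 4 * (norm L2)\<^sup>2)) (2 * (norm (E2 - E1) + E1) / norm Psi)"
proof -
  have "norm a ^ 2 \<le> (E1 / (lam * norm L2 * s2 ^ 2)) ^ 2"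
    using norm_a_le by (simp add: power_mono)
  also have "\<dots> = E1\<^sup>2 / (lam\<^sup>2 * s2 ^ 4 * (norm L2)\<^sup>2)"
    by (simp add: power_divide power_mult_distrib flip: power_mult)
  finally have "norm a ^ 2 \<le> min (E1\<^sup>2 / (lam\<^sup>2 * s2 ^ 4 * (norm L2)\<^sup>2))
                                 (2 * (norm (E2 - E1) + E1) / norm Psi)"
    using norm_a_sq_le_Psi[OF assms] by simp
  moreover have "norm b \<le> norm (b - a ^ 2) + norm a ^ 2"
    using norm_triangle_ineq[of "b - a ^ 2" "a ^ 2"] by (simp add: norm_power)
  ultimately show ?thesis using norm_b_minus_a2_le by linarith
qed

lemma coefficient_bounds:
  assumes "Psi \<noteq> 0" "Ups \<noteq> 0"
  shows "norm a \<le> Min {E1 / (lam * norm L2 * s2 ^ 2),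
                       sqrt (2 * (norm (E2 - E1) + E1) / norm Psi),
                       E1 * sqrt (2 * E1) / sqrt (norm Ups)}"
    and "norm b \<le> E1 / ((lam * s3 - 1) * s3 * norm L3)
           + min (E1\<^sup>2 / (lam\<^sup>2 * s2 ^ 4 * (norm L2)\<^sup>2)) (2 * (norm (E2 - E1) + E1) / norm Psi)"
  using norm_a_le norm_a_sq_le_Psi[OF assms(1)] norm_a_le_Ups[OF assms(2)] norm_b_le[OF assms(1)]
  by (simp_all add: real_le_rsqrt)

end

lemma subord_Cexpr_Jq_coeffs:
  assumes q: "0 < q" "q < 1" and eta: "Re eta > -1" and holf: "f holomorphic_on ball 0 1"
    and sub: "subord (Cexpr q lam (Jq q eta f)) phi" and phi_hol: "phi holomorphic_on ball 0 1"
  obtains w1 w2 where "norm w1 \<le> 1" "norm w2 \<le> 1 - norm w1 ^ 2"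
    and "of_real lam * of_real (qbr_r q 2) ^ 2 * (Lq q eta 2 * tcoeff f 2) = deriv phi 0 * w1"
    and "(of_real lam * of_real (qbr_r q 3) - 1) * of_real (qbr_r q 3) * (Lq q eta 3 * tcoeff f 3)
           + of_real lam * (of_real lam - 1) / 2 * of_real (qbr_r q 2) ^ 4 * (Lq q eta 2 * tcoeff f 2) ^ 2
         = deriv phi 0 * w2 + (deriv ^^ 2) phi 0 / 2 * w1 ^ 2"
proof -
  define JF where
    "JF = Abs_fps (\<lambda>n. if n = 1 then 1 else if 2 \<le> n then Lq q eta n * tcoeff f n else 0)"
  have JF: "Jq q eta f has_fps_expansion JF"
    unfolding JF_def by (rule has_fps_expansion_Jq[OF q eta holf])
  have JF_nth: "JF $ 1 = 1" "JF $ 2 = Lq q eta 2 * tcoeff f 2" "JF $ 3 = Lq q eta 3 * tcoeff f 3"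
    by (simp_all add: JF_def)
  obtain C :: "complex fps" where "Cexpr q lam (Jq q eta f) has_fps_expansion C"
    and C1: "C $ 1 = of_real lam * qnum q 2 ^ 2 * JF $ 2"
    and C2: "C $ 2 = (of_real lam * qnum q 3 - 1) * qnum q 3 * JF $ 3
                 + of_real lam * (of_real lam - 1) / 2 * qnum q 2 ^ 4 * (JF $ 2) ^ 2"
    by (rule has_fps_expansion_Cexpr[OF q JF JF_nth(1)])
  then obtain w1 w2 where "norm w1 \<le> 1" "norm w2 \<le> 1 - norm w1 ^ 2"
    and "C $ 1 = deriv phi 0 * w1" "C $ 2 = deriv phi 0 * w2 + (deriv ^^ 2) phi 0 / 2 * w1 ^ 2"
    using subord_fps_coeffs[OF sub phi_hol] by metis
  thus ?thesis
    using that C1 C2 unfolding JF_nth qnum_numeral by metis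
qed

lemma classC_bi_subordination_coeffs:
  assumes q: "0 < q" "q < 1" and eta: "Re eta > -1" and lam: "lam \<ge> 1"
    and phi_hol: "phi holomorphic_on ball 0 1"
    and E1: "deriv phi 0 = of_real E1" "E1 > 0" and E2: "E2 = (deriv ^^ 2) phi 0 / 2"
    and f: "classC q eta lam phi f"
  obtains u1 u2 v1 v2 where "bi_subordination_coeffs lam (qbr_r q 2) (qbr_r q 3) E1 E2
    (tcoeff f 2) (tcoeff f 3) (Lq q eta 2) (Lq q eta 3) u1 u2 v1 v2"
proof -
  obtain g where bi: "bi_univalent_inv f g" and subF: "subord (Cexpr q lam (Jq q eta f)) phi"
      and subG: "subord (Cexpr q lam (Jq q eta g)) phi"
    using f unfolding classC_def by blast
  have holf: "f holomorphic_on ball 0 1" and holg: "g holomorphic_on ball 0 1"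
    using bi unfolding bi_univalent_inv_def by auto
  have inv: "tcoeff g 2 = - tcoeff f 2" "tcoeff g 3 = 2 * tcoeff f 2 ^ 2 - tcoeff f 3"
    using bi inverse_taylor_coeffs[OF holf holg] unfolding bi_univalent_inv_def by metis+
  show thesis
  proof (rule subord_Cexpr_Jq_coeffs[OF q eta holf subF phi_hol],
      rule subord_Cexpr_Jq_coeffs[OF q eta holg subG phi_hol], goal_cases)
    case (1 u1 u2 v1 v2)
    show thesis
      by (rule that[of u1 u2 v1 v2], unfold_locales)
        (use q lam E1 1 Lq_neq_0[OF q eta, of 2] Lq_neq_0[OF q eta, of 3] in
          \<open>simp_all add: inv qbr_r_2_eq qbr_r_3_eq add_pos_pos flip: E2\<close>)
  qed
qed

theorem corollary2:
  fixes q lam E1 :: real and eta E2 :: complex and phi f :: "complex \<Rightarrow> complex"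
  assumes q: "0 < q" "q < 1"
    and eta: "Re eta > -1"
    and lam: "lam \<ge> 1"
    and phi_hol: "phi holomorphic_on ball 0 1"
    and phi_re: "\<forall>z\<in>ball 0 1. Re (phi z) > 0"
    and phi0: "phi 0 = 1"
    and E1: "deriv phi 0 = of_real E1" "E1 > 0"
    and E2: "E2 = (deriv ^^ 2) phi 0 / 2"
    and Psi_nz: "2 * (lam * qbr_r q 3 - 1) * qbr_r q 3 * Lq q eta 3
                 + lam * (lam - 1) * qbr_r q 2 ^ 4 * (Lq q eta 2)\<^sup>2 \<noteq> 0"
    and Ups_nz: "2 * (lam * qbr_r q 3 - 1) * qbr_r q 3 * E1\<^sup>2 * Lq q eta 3
                 + lam * ((lam - 1) * E1\<^sup>2 + 2 * lam * (E1 - E2)) * qbr_r q 2 ^ 4 * (Lq q eta 2)\<^sup>2 \<noteq> 0"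
    and f: "classC q eta lam phi f"
  shows "norm (tcoeff f 2) \<le> Min {E1 / (lam * norm (Lq q eta 2) * qbr_r q 2 ^ 2),
            sqrt (2 * (norm (E2 - E1) + E1) /
              norm (2 * (lam * qbr_r q 3 - 1) * qbr_r q 3 * Lq q eta 3
                 + lam * (lam - 1) * qbr_r q 2 ^ 4 * (Lq q eta 2)\<^sup>2)),
            E1 * sqrt (2 * E1) /
              sqrt (norm (2 * (lam * qbr_r q 3 - 1) * qbr_r q 3 * E1\<^sup>2 * Lq q eta 3
                 + lam * ((lam - 1) * E1\<^sup>2 + 2 * lam * (E1 - E2)) * qbr_r q 2 ^ 4 * (Lq q eta 2)\<^sup>2))}
       \<and> norm (tcoeff f 3) \<le> E1 / ((lam * qbr_r q 3 - 1) * qbr_r q 3 * norm (Lq q eta 3))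
           + min (E1\<^sup>2 / (lam\<^sup>2 * qbr_r q 2 ^ 4 * (norm (Lq q eta 2))\<^sup>2))
                 (2 * (norm (E2 - E1) + E1) /
                    norm (2 * (lam * qbr_r q 3 - 1) * qbr_r q 3 * Lq q eta 3
                       + lam * (lam - 1) * qbr_r q 2 ^ 4 * (Lq q eta 2)\<^sup>2))"
proof -
  obtain u1 u2 v1 v2 where "bi_subordination_coeffs lam (qbr_r q 2) (qbr_r q 3) E1 E2
      (tcoeff f 2) (tcoeff f 3) (Lq q eta 2) (Lq q eta 3) u1 u2 v1 v2"
    using classC_bi_subordination_coeffs[OF q eta lam phi_hol E1 E2 f] .
  then interpret bi_subordination_coeffs lam "qbr_r q 2" "qbr_r q 3" E1 E2 "tcoeff f 2" "tcoeff f 3"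
      "Lq q eta 2" "Lq q eta 3" u1 u2 v1 v2 .
  show ?thesis
    using coefficient_bounds Psi_nz Ups_nz unfolding Psi_def Ups_def by blast
qed

end
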